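(* Let $n\ge 2$, and consider words in the free monoid $F_n$ on the letters $g_i,g_i^{-1},e_i$ ($1\le i\le n-1$). A move $u\leftrightarrow v$ means replacing a contiguous subword equal to $u$ by $v$ or vice versa. Consider the moves, for $\epsilon\in\{+1,-1\}$ and $i,j\in\{1,\dots,n-1\}$: (M6) $g_i^{\epsilon}g_j^{\epsilon}e_i\leftrightarrow e_je_i$ for $|i-j|=1$; (M7) $e_ig_j^{\epsilon}g_i^{\epsilon}\leftrightarrow e_ie_j$ for $|i-j|=1$; (M20) $e_i\leftrightarrow g_i^{\epsilon}e_i$; (M21) $e_i\leftrightarrow e_ig_i^{\epsilon}$. Then the following moves are realized by finite sequences of the moves (M6), (M7), (M20), (M21): (a) $g_i^{\epsilon}g_j^{\epsilon}e_i\leftrightarrow e_jg_i^{\delta}g_j^{\delta}$ for all $\epsilon,\delta\in\{+1,-1\}$ and $|i-j|=1$; (b) $e_i\leftrightarrow g_i^{k}e_i$ for all $k\in\mathbb Z$; (c) $e_i\leftrightarrow e_ig_i^{k}$ for all $k\in\mathbb Z$.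
   Context: $F_n$ is the free monoid generated by the symbols $g_i,g_i^{-1},e_i$ ($i=1,\dots,n-1$). For $k>0$, $g_i^k$ denotes the word $g_i\cdots g_i$ ($k$ letters), $g_i^{-k}$ denotes $g_i^{-1}\cdots g_i^{-1}$ ($k$ letters), and $g_i^0$ is the empty word. *)

theory Defs
  imports Main
begin

datatype letter = G nat | Ginv nat | E nat

type_synonym word = "letter list"

fun idx :: "letter \<Rightarrow> nat" where
  "idx (G i) = i" | "idx (Ginv i) = i" | "idx (E i) = i"

definition in_Fn :: "nat \<Rightarrow> word \<Rightarrow> bool" where
  "in_Fn n w \<longleftrightarrow> (\<forall>a\<in>set w. 1 \<le> idx a \<and> idx a \<le> n - 1)"

definition gpow :: "nat \<Rightarrow> int \<Rightarrow> word" where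
  "gpow i k = (if 0 \<le> k then replicate (nat k) (G i) else replicate (nat (- k)) (Ginv i))"

definition basic_move :: "nat \<Rightarrow> word \<Rightarrow> word \<Rightarrow> bool" where
  "basic_move n l r \<longleftrightarrow>
    (\<exists>i j \<epsilon>. i \<in> {1..n-1} \<and> j \<in> {1..n-1} \<and> \<epsilon> \<in> {1, -1::int} \<and>
      ((\<bar>int i - int j\<bar> = 1 \<and> l = gpow i \<epsilon> @ gpow j \<epsilon> @ [E i] \<and> r = [E j, E i]) \<or>
       (\<bar>int i - int j\<bar> = 1 \<and> l = [E i] @ gpow j \<epsilon> @ gpow i \<epsilon> \<and> r = [E i, E j]) \<or>
       (l = [E i] \<and> r = gpow i \<epsilon> @ [E i]) \<or>
       (l = [E i] \<and> r = [E i] @ gpow i \<epsilon>)))"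

definition move_step :: "nat \<Rightarrow> word \<Rightarrow> word \<Rightarrow> bool" where
  "move_step n x y \<longleftrightarrow>
    (\<exists>p q l r. x = p @ l @ q \<and> y = p @ r @ q \<and> in_Fn n p \<and> in_Fn n q \<and>
      (basic_move n l r \<or> basic_move n r l))"

end

theory Submission
  imports Defs
begin

text \<open>
  Move (a) passes through the word e_j e_i: an (M6) step reaches it from the left-hand side and
  an (M7) step, read backwards, leaves it towards the right-hand side.  For (b) and (c), g_i^k
  is |k| copies of a single letter g_i^{\<plusminus>1}, and an (M20) resp. (M21) step inserts one copy
  next to e_i at a time.
\<close>

lemma in_Fn_append [simp]: "in_Fn n (xs @ ys) \<longleftrightarrow> in_Fn n xs \<and> in_Fn n ys"
  by (auto simp: in_Fn_def)

lemma in_Fn_Nil [simp]: "in_Fn n []"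
  by (simp add: in_Fn_def)

lemma gpow_of_nat: "gpow i (int m) = replicate m (G i)"
  by (simp add: gpow_def)

lemma gpow_neg_of_nat: "gpow i (- int m) = replicate m (Ginv i)"
  by (simp add: gpow_def)

lemma move_step_if_basic_move: "basic_move n l r \<Longrightarrow> move_step n l r"
  unfolding move_step_def by (rule exI[of _ "[]"], rule exI[of _ "[]"]) auto

lemma move_step_if_basic_move_rev: "basic_move n r l \<Longrightarrow> move_step n l r"
  unfolding move_step_def by (rule exI[of _ "[]"], rule exI[of _ "[]"]) auto

lemma move_step_append_left:
  assumes "in_Fn n p" and "move_step n x y"
  shows "move_step n (p @ x) (p @ y)"
proof -
  obtain p' q l r where "x = p' @ l @ q" "y = p' @ r @ q" "in_Fn n p'" "in_Fn n q"
    "basic_move n l r \<or> basic_move n r l"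
    using assms(2) unfolding move_step_def by blast
  then show ?thesis
    unfolding move_step_def using assms(1)
    by (intro exI[of _ "p @ p'"] exI[of _ q] exI[of _ l] exI[of _ r]) simp
qed

lemma move_step_append_right:
  assumes "in_Fn n q" and "move_step n x y"
  shows "move_step n (x @ q) (y @ q)"
proof -
  obtain p q' l r where "x = p @ l @ q'" "y = p @ r @ q'" "in_Fn n p" "in_Fn n q'"
    "basic_move n l r \<or> basic_move n r l"
    using assms(2) unfolding move_step_def by blast
  then show ?thesis
    unfolding move_step_def using assms(1)
    by (intro exI[of _ p] exI[of _ "q' @ q"] exI[of _ l] exI[of _ r]) simp
qed

lemma basic_move_M6:
  "\<lbrakk>i \<in> {1..n-1}; j \<in> {1..n-1}; \<bar>int i - int j\<bar> = 1; \<epsilon> \<in> {1, -1::int}\<rbrakk>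
   \<Longrightarrow> basic_move n (gpow i \<epsilon> @ gpow j \<epsilon> @ [E i]) [E j, E i]"
  unfolding basic_move_def by blast

lemma basic_move_M7:
  "\<lbrakk>i \<in> {1..n-1}; j \<in> {1..n-1}; \<bar>int i - int j\<bar> = 1; \<epsilon> \<in> {1, -1::int}\<rbrakk>
   \<Longrightarrow> basic_move n ([E i] @ gpow j \<epsilon> @ gpow i \<epsilon>) [E i, E j]"
  unfolding basic_move_def by blast

lemma basic_move_M20:
  "\<lbrakk>i \<in> {1..n-1}; \<epsilon> \<in> {1, -1::int}\<rbrakk> \<Longrightarrow> basic_move n [E i] (gpow i \<epsilon> @ [E i])"
  unfolding basic_move_def by blast

lemma basic_move_M21:
  "\<lbrakk>i \<in> {1..n-1}; \<epsilon> \<in> {1, -1::int}\<rbrakk> \<Longrightarrow> basic_move n [E i] ([E i] @ gpow i \<epsilon>)"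
  unfolding basic_move_def by blast

lemma moves_M6_then_M7_rev:
  assumes "i \<in> {1..n-1}" "j \<in> {1..n-1}" "\<bar>int i - int j\<bar> = 1"
    and "\<epsilon> \<in> {1, -1::int}" "\<delta> \<in> {1, -1::int}"
  shows "(move_step n)\<^sup>*\<^sup>* (gpow i \<epsilon> @ gpow j \<epsilon> @ [E i]) ([E j] @ gpow i \<delta> @ gpow j \<delta>)"
proof -
  have "move_step n (gpow i \<epsilon> @ gpow j \<epsilon> @ [E i]) [E j, E i]"
    using assms by (intro move_step_if_basic_move basic_move_M6)
  moreover have "move_step n [E j, E i] ([E j] @ gpow i \<delta> @ gpow j \<delta>)"
    using assms by (intro move_step_if_basic_move_rev basic_move_M7) auto
  ultimately show ?thesis
    by (rule converse_rtranclp_into_rtranclp[OF _ r_into_rtranclp])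
qed

lemma moves_absorb_prefix_replicate:
  assumes "move_step n [E i] [a, E i]" and "in_Fn n [a]"
  shows "(move_step n)\<^sup>*\<^sup>* [E i] (replicate m a @ [E i])"
proof (induction m)
  case 0
  show ?case by simp
next
  case (Suc m)
  have "in_Fn n (replicate m a)"
    using assms(2) by (simp add: in_Fn_def)
  then have "move_step n (replicate m a @ [E i]) (replicate m a @ [a, E i])"
    using assms(1) by (rule move_step_append_left)
  with Suc.IH show ?case
    by (simp add: replicate_append_same[symmetric] rtranclp.rtrancl_into_rtrancl)
qed

lemma moves_absorb_suffix_replicate:
  assumes "move_step n [E i] [E i, a]" and "in_Fn n [a]"
  shows "(move_step n)\<^sup>*\<^sup>* [E i] ([E i] @ replicate m a)"
proof (induction m)
  case 0
  show ?case by simp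
next
  case (Suc m)
  have "in_Fn n (replicate m a)"
    using assms(2) by (simp add: in_Fn_def)
  then have "move_step n ([E i] @ replicate m a) ([E i, a] @ replicate m a)"
    using assms(1) by (rule move_step_append_right)
  with Suc.IH show ?case
    by (simp add: rtranclp.rtrancl_into_rtrancl)
qed

lemma moves_prefix_gpow:
  assumes i: "i \<in> {1..n-1}"
  shows "(move_step n)\<^sup>*\<^sup>* [E i] (gpow i k @ [E i])"
proof (cases k rule: int_cases2)
  case (nonneg m)
  have "move_step n [E i] [G i, E i]"
    using basic_move_M20[OF i, of 1] by (simp add: move_step_if_basic_move gpow_def)
  then show ?thesis
    using moves_absorb_prefix_replicate[of n i "G i" m] i
    by (simp add: nonneg gpow_of_nat in_Fn_def)
next
  case (nonpos m)
  have "move_step n [E i] [Ginv i, E i]"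
    using basic_move_M20[OF i, of "-1"] by (simp add: move_step_if_basic_move gpow_def)
  then show ?thesis
    using moves_absorb_prefix_replicate[of n i "Ginv i" m] i
    by (simp add: nonpos gpow_neg_of_nat in_Fn_def)
qed

lemma moves_suffix_gpow:
  assumes i: "i \<in> {1..n-1}"
  shows "(move_step n)\<^sup>*\<^sup>* [E i] ([E i] @ gpow i k)"
proof (cases k rule: int_cases2)
  case (nonneg m)
  have "move_step n [E i] [E i, G i]"
    using basic_move_M21[OF i, of 1] by (simp add: move_step_if_basic_move gpow_def)
  then show ?thesis
    using moves_absorb_suffix_replicate[of n i "G i" m] i
    by (simp add: nonneg gpow_of_nat in_Fn_def)
next
  case (nonpos m)
  have "move_step n [E i] [E i, Ginv i]"
    using basic_move_M21[OF i, of "-1"] by (simp add: move_step_if_basic_move gpow_def)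
  then show ?thesis
    using moves_absorb_suffix_replicate[of n i "Ginv i" m] i
    by (simp add: nonpos gpow_neg_of_nat in_Fn_def)
qed

theorem lemma5p4:
  fixes n :: nat
  assumes "n \<ge> 2"
  shows "(\<forall>i j \<epsilon> \<delta>. i \<in> {1..n-1} \<and> j \<in> {1..n-1} \<and> \<bar>int i - int j\<bar> = 1 \<and>
            \<epsilon> \<in> {1, -1::int} \<and> \<delta> \<in> {1, -1::int} \<longrightarrow>
            (move_step n)\<^sup>*\<^sup>* (gpow i \<epsilon> @ gpow j \<epsilon> @ [E i]) ([E j] @ gpow i \<delta> @ gpow j \<delta>))
       \<and> (\<forall>i (k::int). i \<in> {1..n-1} \<longrightarrow> (move_step n)\<^sup>*\<^sup>* [E i] (gpow i k @ [E i]))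
       \<and> (\<forall>i (k::int). i \<in> {1..n-1} \<longrightarrow> (move_step n)\<^sup>*\<^sup>* [E i] ([E i] @ gpow i k))"
  using moves_M6_then_M7_rev moves_prefix_gpow moves_suffix_gpow by meson

end
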